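(* Let $m\ge1$, $f_1,\ldots,f_{m+1}$ arithmetic functions, and $\gamma_0,\gamma_1,\ldots,\gamma_m\in\mathbb{N}$ with $\gamma_0\mid\gamma_1\mid\cdots\mid\gamma_m$. Define $(a_{\gamma_0}S)(n_1,\ldots,n_{m+1}):=a_{\gamma_0}(n_1)\,S^{(\gamma_1,\ldots,\gamma_m)}_{f_1,\ldots,f_{m+1}}(n_1,\ldots,n_{m+1})$. Then for all $\boldsymbol s=(s_1,\ldots,s_{m+1})\in\mathbb{C}^{m+1}$ with $\Re(s_j)>1$ for $2\le j\le m+1$ and $\Re(s_1+\cdots+s_j)>\sigma(f_j)$ for $1\le j\le m+1$, \[ L(\boldsymbol s;a_{\gamma_0}S)=\prod_{j=2}^{m+1}\zeta(s_j)\cdot\prod_{j=1}^{m+1}L\bigl(s_1+\cdots+s_j;f_j^{[\gamma_{j-1}]}\bigr). \] In particular, for $\gamma_0=1$, \[ L\bigl(\boldsymbol s;S^{(\gamma_1,\ldots,\gamma_m)}_{f_1,\ldots,f_{m+1}}\bigr)=\prod_{j=2}^{m+1}\zeta(s_j)\cdot L(s_1;f_1)\prod_{j=2}^{m+1}L\bigl(s_1+\cdots+s_j;f_j^{[\gamma_{j-1}]}\bigr). \]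
   Context: An arithmetic function is a map $f:\mathbb{N}\to\mathbb{C}$, with $f(x)=0$ for $x\notin\mathbb{N}$. For $\gamma\in\mathbb{N}$, $a_\gamma(n)=1$ if $n=d^\gamma$ for some $d\in\mathbb{N}$ and $0$ otherwise; $f^{[\gamma]}:=a_\gamma f$ (pointwise product). $L(s;f)=\sum_{n\ge1}f(n)n^{-s}$, $\sigma(f)$ its abscissa of absolute convergence, $\zeta$ the Riemann zeta function. For $F:\mathbb{N}^k\to\mathbb{C}$, $L(\boldsymbol s;F):=\sum_{n_1,\ldots,n_k\ge1}F(n_1,\ldots,n_k)n_1^{-s_1}\cdots n_k^{-s_k}$. The multiple Ramanujan sum is \[ S^{(\gamma_1,\ldots,\gamma_m)}_{f_1,\ldots,f_{m+1}}(n_1,\ldots,n_{m+1}):=\sum_{\substack{(d_1,\ldots,d_m)\in\mathbb{N}^m\\ d_j^{\gamma_j}\mid\gcd(n_1,\ldots,n_{j+1})\ (1\le j\le m)}} f_1\Bigl(\frac{n_1}{d_1^{\gamma_1}}\Bigr)f_2\Bigl(\frac{d_1^{\gamma_1}}{d_2^{\gamma_2}}\Bigr)\cdots f_m\Bigl(\frac{d_{m-1}^{\gamma_{m-1}}}{d_m^{\gamma_m}}\Bigr)f_{m+1}\bigl(d_m^{\gamma_m}\bigr). \] *)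

theory Defs
  imports "HOL-Analysis.Analysis"
begin

text \<open>Arithmetic functions are maps nat => complex; only values at n >= 1 matter.
  The value of f at a rational a/b (b >= 1) is f(a div b) if b divides a and 0 otherwise.\<close>

definition fq :: "(nat \<Rightarrow> complex) \<Rightarrow> nat \<Rightarrow> nat \<Rightarrow> complex" where
  "fq f a b = (if b \<ge> 1 \<and> b dvd a then f (a div b) else 0)"

definition a_pow :: "nat \<Rightarrow> nat \<Rightarrow> complex" where
  "a_pow \<gamma> n = (if \<exists>d::nat. d \<ge> 1 \<and> n = d ^ \<gamma> then 1 else 0)"

definition restr_pow :: "nat \<Rightarrow> (nat \<Rightarrow> complex) \<Rightarrow> nat \<Rightarrow> complex" where
  "restr_pow \<gamma> f n = a_pow \<gamma> n * f n"

definition L :: "complex \<Rightarrow> (nat \<Rightarrow> complex) \<Rightarrow> complex" where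
  "L s f = (\<Sum>\<^sub>\<infinity>n\<in>{1..}. f n / of_nat n powr s)"

definition zeta :: "complex \<Rightarrow> complex" where
  "zeta s = (\<Sum>\<^sub>\<infinity>n\<in>{1..}. 1 / of_nat n powr s)"

definition sigma_abs :: "(nat \<Rightarrow> complex) \<Rightarrow> ereal" where
  "sigma_abs f = Inf {ereal x | x. summable (\<lambda>n. norm (f (Suc n)) / real (Suc n) powr x)}"

definition tuples :: "nat \<Rightarrow> (nat \<Rightarrow> nat) set" where
  "tuples k = {n. (\<forall>i\<in>{1..k}. n i \<ge> 1) \<and> (\<forall>i. i \<notin> {1..k} \<longrightarrow> n i = 0)}"

definition L_multi :: "nat \<Rightarrow> (nat \<Rightarrow> complex) \<Rightarrow> ((nat \<Rightarrow> nat) \<Rightarrow> complex) \<Rightarrow> complex" where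
  "L_multi k s F = (\<Sum>\<^sub>\<infinity>n\<in>tuples k. F n / (\<Prod>i\<in>{1..k}. of_nat (n i) powr s i))"

text \<open>Multiple Ramanujan sum S^{(gamma_1..gamma_m)}_{f_1..f_{m+1}}(n_1..n_{m+1}),
  with f j = f_j, \<gamma> j = gamma_j (indices 1..m used), n j = n_j.\<close>
definition ram_sum :: "nat \<Rightarrow> (nat \<Rightarrow> nat) \<Rightarrow> (nat \<Rightarrow> nat \<Rightarrow> complex) \<Rightarrow> (nat \<Rightarrow> nat) \<Rightarrow> complex" where
  "ram_sum m \<gamma> f n =
     (\<Sum>d\<in>{d. (\<forall>j\<in>{1..m}. d j \<ge> 1 \<and> d j ^ \<gamma> j dvd Gcd (n ` {1..j+1}))
              \<and> (\<forall>j. j \<notin> {1..m} \<longrightarrow> d j = 0)}.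
        fq (f 1) (n 1) (d 1 ^ \<gamma> 1)
        * (\<Prod>j\<in>{2..m}. fq (f j) (d (j - 1) ^ \<gamma> (j - 1)) (d j ^ \<gamma> j))
        * f (m + 1) (d m ^ \<gamma> m))"

end

theory Submission
  imports Defs
begin

text \<open>
  Put e_0 = n_1, e_j = d_j^\<gamma>_j (1 \<le> j \<le> m) and e_(m+1) = 1. A term of the multiple series
  vanishes unless n_1 is a \<gamma>_0-th power, e_(m+1) | e_m | ... | e_0 and e_(j-1) | n_j. Because
  \<gamma>_(j-1) | \<gamma>_j, each quotient e_(j-1) / e_j is then a \<gamma>_(j-1)-th power c_j^\<gamma>_(j-1), so the
  nonvanishing terms are parametrised bijectively by free coordinates c_1, ..., c_(m+1) \<ge> 1 and
  k_j = n_j / e_(j-1) \<ge> 1 (2 \<le> j \<le> m+1). Since n_j = k_j c_j^\<gamma>_(j-1) ... c_(m+1)^\<gamma>_m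
  (with k_1 = 1), in these coordinates the term is the product of the factors
  f_j(c_j^\<gamma>_(j-1)) (c_j^\<gamma>_(j-1))^-(s_1 + ... + s_j) and k_j^-s_j. Each factor series
  converges absolutely, so the multiple series is the product of the factor series.
\<close>

section \<open>Products of absolutely summable families\<close>

lemma norm_summable_on_product:
  fixes F :: "'a \<Rightarrow> 'c::{banach, real_normed_div_algebra}" and G :: "'b \<Rightarrow> 'c"
  assumes "(\<lambda>x. norm (F x)) summable_on P" "(\<lambda>y. norm (G y)) summable_on Q"
  shows "(\<lambda>(x, y). norm (F x * G y)) summable_on (P \<times> Q)"
proof -
  have "(\<lambda>z. norm (case z of (x, y) \<Rightarrow> F x * G y)) summable_on Sigma P (\<lambda>_. Q)"
  proof (rule Infinite_Sum.abs_summable_on_Sigma_iff[THEN iffD2], intro conjI ballI)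
    show "(\<lambda>y. norm (case (x, y) of (x, y) \<Rightarrow> F x * G y)) summable_on Q" for x
      using summable_on_cmult_right[OF assms(2), of "norm (F x)"] by (simp add: norm_mult)
    have "(\<lambda>x. norm (F x) * infsum (\<lambda>y. norm (G y)) Q) summable_on P"
      using summable_on_cmult_left[OF assms(1)] by simp
    then show "(\<lambda>x. norm (\<Sum>\<^sub>\<infinity>y\<in>Q. norm (case (x, y) of (x, y) \<Rightarrow> F x * G y)))
        summable_on P"
      by (simp add: norm_mult infsum_cmult_right' infsum_nonneg)
  qed
  then show ?thesis
    by (simp add: case_prod_unfold)
qed

lemma norm_summable_on_prod_PiE:
  fixes f :: "'a \<Rightarrow> 'b \<Rightarrow> 'c::{banach, real_normed_field}"
  assumes "finite A" "\<And>x. x \<in> A \<Longrightarrow> (\<lambda>y. norm (f x y)) summable_on B x"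
  shows "(\<lambda>g. norm (\<Prod>x\<in>A. f x (g x))) summable_on PiE A B"
  using assms
proof (induction A rule: finite_induct)
  case empty
  then show ?case by simp
next
  case (insert x A)
  have PiE_insert: "PiE (insert x A) B = (\<lambda>(g, y). g(x := y)) ` (PiE A B \<times> B x)"
    unfolding PiE_insert_eq by (subst swap_product [symmetric]) (simp add: image_image case_prod_unfold)
  have inj: "inj_on (\<lambda>(g, y). g(x := y)) (PiE A B \<times> B x)"
    using \<open>x \<notin> A\<close> by (rule inj_combinator')
  have "(\<Prod>z\<in>A. f z ((g(x := y)) z)) = (\<Prod>z\<in>A. f z (g z))" for g y
    using insert.hyps by (intro prod.cong) auto
  then have comp: "(\<lambda>g. norm (\<Prod>z\<in>insert x A. f z (g z))) \<circ> (\<lambda>(g, y). g(x := y))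
      = (\<lambda>(g, y). norm ((\<Prod>z\<in>A. f z (g z)) * f x y))"
    using insert.hyps by (auto simp: fun_eq_iff mult.commute)
  have "(\<lambda>(g, y). norm ((\<Prod>z\<in>A. f z (g z)) * f x y)) summable_on (PiE A B \<times> B x)"
    using insert by (intro norm_summable_on_product) auto
  then show ?case
    by (simp only: PiE_insert summable_on_reindex[OF inj] comp)
qed

lemma has_sum_prod_PiE:
  fixes f :: "'a \<Rightarrow> 'b \<Rightarrow> 'c::{banach, real_normed_field}"
  assumes "finite A" "\<And>x. x \<in> A \<Longrightarrow> (\<lambda>y. norm (f x y)) summable_on B x"
  shows "((\<lambda>g. \<Prod>x\<in>A. f x (g x)) has_sum (\<Prod>x\<in>A. infsum (f x) (B x))) (PiE A B)"
proof -
  have "(\<lambda>g. \<Prod>x\<in>A. f x (g x)) summable_on PiE A B"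
    using norm_summable_on_prod_PiE[OF assms] by (rule abs_summable_summable)
  then show ?thesis
    by (simp only: infsum_prod_PiE_abs[OF assms, symmetric] has_sum_infsum)
qed

lemma has_sum_reindex_support:
  assumes "inj_on g A" "g ` A \<subseteq> B"
    and "\<And>a. a \<in> A \<Longrightarrow> F (g a) = G a"
    and "\<And>b. b \<in> B - g ` A \<Longrightarrow> F b = 0"
    and "(G has_sum S) A"
  shows "(F has_sum S) B"
proof -
  have "((F \<circ> g) has_sum S) A"
    using assms(5) has_sum_cong[of A "F \<circ> g" G] assms(3) by simp
  then have "(F has_sum S) (g ` A)"
    using has_sum_reindex[OF assms(1)] by blast
  moreover have "(F has_sum S) (g ` A) \<longleftrightarrow> (F has_sum S) B"
    using assms(2,4) by (intro has_sum_cong_neutral) auto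
  ultimately show ?thesis
    by blast
qed

section \<open>Dirichlet series\<close>

lemma of_nat_mult_powr: "(of_nat (a * b) :: complex) powr s = of_nat a powr s * of_nat b powr s"
  by (simp add: powr_times_real)

lemma of_nat_powr_sum:
  assumes "finite J" "0 < n"
  shows "(\<Prod>j\<in>J. (of_nat n :: complex) powr s j) = of_nat n powr (\<Sum>j\<in>J. s j)"
  using assms by (induction J rule: finite_induct) (auto simp: powr_add)

lemma of_nat_prod_tails_powr:
  fixes t :: "nat \<Rightarrow> nat" and s :: "nat \<Rightarrow> complex"
  assumes "\<And>i. i \<in> {1..N} \<Longrightarrow> 0 < t i"
  shows "(\<Prod>j=1..N. (of_nat (\<Prod>i=j..N. t i) :: complex) powr s j)
    = (\<Prod>i=1..N. of_nat (t i) powr (\<Sum>l=1..i. s l))"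
  using assms
proof (induction N)
  case 0
  then show ?case by simp
next
  case (Suc N)
  have "(\<Prod>i=j..Suc N. t i) = (\<Prod>i=j..N. t i) * t (Suc N)" if "j \<in> {1..Suc N}" for j
    using that by (simp add: prod.nat_ivl_Suc')
  then have "(\<Prod>j=1..Suc N. (of_nat (\<Prod>i=j..Suc N. t i) :: complex) powr s j)
      = (\<Prod>j=1..Suc N. of_nat (\<Prod>i=j..N. t i) powr s j * of_nat (t (Suc N)) powr s j)"
    by (intro prod.cong) (simp_all only: of_nat_mult_powr)
  also have "\<dots> = (\<Prod>j=1..N. (of_nat (\<Prod>i=j..N. t i) :: complex) powr s j)
      * of_nat (t (Suc N)) powr (\<Sum>l=1..Suc N. s l)"
    using Suc.prems[of "Suc N"] by (simp add: prod.distrib prod.nat_ivl_Suc' of_nat_powr_sum powr_add)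
  finally show ?case
    using Suc by (simp add: prod.nat_ivl_Suc')
qed

lemma norm_of_nat_powr: "norm ((of_nat n :: complex) powr s) = real n powr Re s"
  using norm_powr_real_powr[of "of_nat n" s] by simp

lemma norm_summable_zeta_series:
  assumes "1 < Re s"
  shows "(\<lambda>k. norm (1 / (of_nat k :: complex) powr s)) summable_on {1..}"
proof -
  have "summable (\<lambda>k. real k powr (- Re s))"
    using assms by (simp add: summable_real_powr_iff)
  then have "summable (\<lambda>k. norm (norm (1 / (of_nat k :: complex) powr s)))"
    by (simp add: norm_divide norm_of_nat_powr powr_minus_divide)
  then show ?thesis
    by (intro summable_on_subset[OF norm_summable_imp_summable_on]) auto
qed

lemma norm_summable_Dirichlet_series:
  assumes "sigma_abs f < ereal (Re s)"
  shows "(\<lambda>n. norm (f n / (of_nat n :: complex) powr s)) summable_on {1..}"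
proof -
  obtain x where x: "summable (\<lambda>n. norm (f (Suc n)) / real (Suc n) powr x)" "x < Re s"
    using assms unfolding sigma_abs_def by (auto simp: Inf_less_iff)
  have "summable (\<lambda>n. norm (f n) / real n powr x)"
    using x(1) summable_Suc_iff[of "\<lambda>n. norm (f n) / real n powr x"] by simp
  moreover have "norm (norm (f n / (of_nat n :: complex) powr s)) \<le> norm (f n) / real n powr x"
    for n
  proof (cases "n = 0")
    case False
    then have "real n powr x \<le> real n powr Re s"
      using x(2) by (intro powr_mono) auto
    then show ?thesis
      using False by (simp add: norm_divide norm_of_nat_powr divide_left_mono)
  qed simp
  ultimately have "summable (\<lambda>n. norm (f n / (of_nat n :: complex) powr s))"
    by (rule summable_comparison_test')
  then show ?thesis
    by (intro summable_on_subset[OF norm_summable_imp_summable_on]) auto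
qed

lemma inj_on_nat_power: "0 < \<gamma> \<Longrightarrow> inj_on (\<lambda>c::nat. c ^ \<gamma>) A"
  by (intro inj_onI) (simp add: power_eq_iff_eq_base)

lemma summable_on_powers:
  fixes g :: "nat \<Rightarrow> 'a::banach"
  assumes "0 < \<gamma>" "g summable_on {1..}"
  shows "(\<lambda>c::nat. g (c ^ \<gamma>)) summable_on {1..}"
proof -
  have "g summable_on (\<lambda>c. c ^ \<gamma>) ` {1..}"
    using assms(2) by (rule summable_on_subset_banach) auto
  then show ?thesis
    unfolding summable_on_reindex[OF inj_on_nat_power[OF assms(1)]] o_def .
qed

lemma L_restr_pow:
  assumes "0 < \<gamma>"
  shows "L s (restr_pow \<gamma> f) = (\<Sum>\<^sub>\<infinity>c\<in>{1..}. f (c ^ \<gamma>) / of_nat (c ^ \<gamma>) powr s)"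
proof -
  let ?U = "(\<lambda>c::nat. c ^ \<gamma>) ` {1..}"
  have "L s (restr_pow \<gamma> f) = (\<Sum>\<^sub>\<infinity>n\<in>?U. f n / of_nat n powr s)"
    unfolding L_def by (intro infsum_cong_neutral) (auto simp: restr_pow_def a_pow_def)
  also have "\<dots> = (\<Sum>\<^sub>\<infinity>c\<in>{1..}. f (c ^ \<gamma>) / of_nat (c ^ \<gamma>) powr s)"
    unfolding infsum_reindex[OF inj_on_nat_power[OF assms]] o_def ..
  finally show ?thesis .
qed

lemma a_pow_one: "1 \<le> n \<Longrightarrow> a_pow 1 n = 1"
  by (auto simp: a_pow_def)

lemma L_restr_pow_one: "L s (restr_pow 1 f) = L s f"
  unfolding L_def by (intro infsum_cong) (auto simp: restr_pow_def a_pow_def)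

section \<open>Parametrising the support of the multiple series\<close>

lemma fq_mult_right: "0 < b \<Longrightarrow> fq f (a * b) b = f a"
  by (simp add: fq_def)

lemma fq_nonzero_imp_dvd: "fq f a b \<noteq> 0 \<Longrightarrow> b dvd a"
  by (simp add: fq_def split: if_splits)

lemma pow_dvd_pow_quotient:
  fixes v w :: nat
  assumes "\<delta>' dvd \<delta>" "0 < \<delta>'" "w ^ \<delta> dvd v ^ \<delta>'" "0 < v"
  obtains c where "0 < c" "v ^ \<delta>' = c ^ \<delta>' * w ^ \<delta>"
proof
  define u where "u = w ^ (\<delta> div \<delta>')"
  have "w ^ \<delta> = u ^ \<delta>'"
    using assms(1) by (simp add: u_def power_mult[symmetric])
  then have "u dvd v"
    using assms(2,3) by (simp add: pow_divides_pow_iff)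
  then show "0 < v div u" "v ^ \<delta>' = (v div u) ^ \<delta>' * w ^ \<delta>"
    using assms(4) \<open>w ^ \<delta> = u ^ \<delta>'\<close>
    by (auto simp: dvd_div_eq_0_iff power_mult_distrib[symmetric] intro!: Nat.gr0I)
qed

lemma tuples_pos:
  assumes "n \<in> tuples k" "i \<in> {1..k}"
  shows "0 < n i"
proof -
  have "1 \<le> n i"
    using assms unfolding tuples_def by blast
  then show ?thesis by simp
qed

lemma tuples_outside: "n \<in> tuples k \<Longrightarrow> i \<notin> {1..k} \<Longrightarrow> n i = 0"
  unfolding tuples_def by blast

lemma prod_atLeast1_split: "(\<Prod>j\<in>{1..(n::nat)+1}. F j) = F 1 * (\<Prod>j\<in>{2..n+1}. F j)"
  by (simp add: prod.atLeast_Suc_atMost numeral_2_eq_2 mult.assoc)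

lemma L_multi_cong:
  assumes "\<And>n. n \<in> tuples k \<Longrightarrow> F n = G n"
  shows "L_multi k s F = L_multi k s G"
  unfolding L_multi_def using assms by (intro infsum_cong) simp

locale exponent_chain =
  fixes m :: nat and \<gamma> :: "nat \<Rightarrow> nat"
  assumes m_pos: "1 \<le> m"
    and gamma_pos: "\<forall>j\<in>{0..m}. 1 \<le> \<gamma> j"
    and gamma_dvd_succ: "\<forall>j\<in>{1..m}. \<gamma> (j - 1) dvd \<gamma> j"
begin

lemma gamma_gt_0: "j \<le> m \<Longrightarrow> 0 < \<gamma> j"
  using gamma_pos by force

lemma gamma_dvd: "i \<le> j \<Longrightarrow> j \<le> m \<Longrightarrow> \<gamma> i dvd \<gamma> j"
proof (induction j)
  case (Suc j)
  show ?case
  proof (cases "i = Suc j")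
    case False
    then have "\<gamma> i dvd \<gamma> j"
      using Suc by simp
    also have "\<gamma> j dvd \<gamma> (Suc j)"
      using bspec[OF gamma_dvd_succ, of "Suc j"] Suc.prems by simp
    finally show ?thesis .
  qed simp
qed simp

definition ram_divisors :: "(nat \<Rightarrow> nat) \<Rightarrow> (nat \<Rightarrow> nat) set" where
  "ram_divisors n = {d. (\<forall>j\<in>{1..m}. d j \<ge> 1 \<and> d j ^ \<gamma> j dvd Gcd (n ` {1..j+1}))
     \<and> (\<forall>j. j \<notin> {1..m} \<longrightarrow> d j = 0)}"

lemma ram_divisors_pos:
  assumes "d \<in> ram_divisors n" "j \<in> {1..m}"
  shows "0 < d j"
proof -
  have "1 \<le> d j"
    using assms unfolding ram_divisors_def by blast
  then show ?thesis by simp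
qed

lemma ram_divisors_dvd:
  assumes "d \<in> ram_divisors n" "j \<in> {1..m}" "i \<in> {1..j+1}"
  shows "d j ^ \<gamma> j dvd n i"
proof -
  have "d j ^ \<gamma> j dvd Gcd (n ` {1..j+1})"
    using assms(1,2) unfolding ram_divisors_def by blast
  then show ?thesis
    using assms(3) by (simp add: dvd_Gcd_iff)
qed

lemma ram_divisors_outside: "d \<in> ram_divisors n \<Longrightarrow> j \<notin> {1..m} \<Longrightarrow> d j = 0"
  unfolding ram_divisors_def by blast

text \<open>The j-th factor of the Ramanujan sum is f_j(e_(j-1) / e_j) for e = ram_chain n d, uniformly
  in 1 \<le> j \<le> m+1 thanks to the outer entries e_0 = n_1 and e_(m+1) = 1.\<close>

definition ram_chain :: "(nat \<Rightarrow> nat) \<Rightarrow> (nat \<Rightarrow> nat) \<Rightarrow> nat \<Rightarrow> nat" where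
  "ram_chain n d j = (if j = 0 then n 1 else if j \<le> m then d j ^ \<gamma> j else 1)"

lemma ram_sum_eq:
  "ram_sum m \<gamma> f n
    = (\<Sum>d\<in>ram_divisors n. \<Prod>j\<in>{1..m+1}. fq (f j) (ram_chain n d (j - 1)) (ram_chain n d j))"
proof -
  have split: "(\<Prod>j\<in>{1..m+1}. F j) = F 1 * (\<Prod>j\<in>{2..m}. F j) * F (m + 1)"
    for F :: "nat \<Rightarrow> complex"
    using m_pos by (simp add: prod.atLeast_Suc_atMost prod.nat_ivl_Suc' numeral_2_eq_2 mult.assoc)
  have middle: "(\<Prod>j\<in>{2..m}. fq (f j) (d (j - 1) ^ \<gamma> (j - 1)) (d j ^ \<gamma> j))
      = (\<Prod>j\<in>{2..m}. fq (f j) (ram_chain n d (j - 1)) (ram_chain n d j))" for d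
    by (intro prod.cong) (auto simp: ram_chain_def)
  show ?thesis
    unfolding ram_sum_def ram_divisors_def split middle
    using m_pos by (intro sum.cong) (simp_all add: ram_chain_def fq_def)
qed

text \<open>A point p of coord_space holds the coordinates c_j = p (Inl j) and k_j = p (Inr j) of the
  proof idea; block_tail p j is e_j = c_(j+1)^\<gamma>_j \<cdots> c_(m+1)^\<gamma>_m and tail_root p j its
  \<gamma>_j-th root d_j.\<close>

definition coords :: "(nat + nat) set" where
  "coords = {1..m+1} <+> {2..m+1}"

definition coord_space :: "(nat + nat \<Rightarrow> nat) set" where
  "coord_space = PiE coords (\<lambda>_. {1..})"

definition block :: "(nat + nat \<Rightarrow> nat) \<Rightarrow> nat \<Rightarrow> nat" where
  "block p j = p (Inl j) ^ \<gamma> (j - 1)"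

definition block_tail :: "(nat + nat \<Rightarrow> nat) \<Rightarrow> nat \<Rightarrow> nat" where
  "block_tail p j = (\<Prod>i\<in>{j+1..m+1}. block p i)"

definition tail_root :: "(nat + nat \<Rightarrow> nat) \<Rightarrow> nat \<Rightarrow> nat" where
  "tail_root p j = (\<Prod>i\<in>{j+1..m+1}. p (Inl i) ^ (\<gamma> (i - 1) div \<gamma> j))"

definition param_n :: "(nat + nat \<Rightarrow> nat) \<Rightarrow> nat \<Rightarrow> nat" where
  "param_n p j = (if j \<in> {1..m+1} then block_tail p (j - 1) * (if j = 1 then 1 else p (Inr j)) else 0)"

definition param_d :: "(nat + nat \<Rightarrow> nat) \<Rightarrow> nat \<Rightarrow> nat" where
  "param_d p j = (if j \<in> {1..m} then tail_root p j else 0)"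

lemma Inl_mem_coords: "Inl j \<in> coords \<longleftrightarrow> j \<in> {1..m+1}"
  and Inr_mem_coords: "Inr j \<in> coords \<longleftrightarrow> j \<in> {2..m+1}"
  by (auto simp: coords_def Plus_def)

lemma coord_space_pos:
  assumes "p \<in> coord_space"
  shows "j \<in> {1..m+1} \<Longrightarrow> 0 < p (Inl j)" and "j \<in> {2..m+1} \<Longrightarrow> 0 < p (Inr j)"
  using assms PiE_mem[of p coords "\<lambda>_. {1..}"]
  by (auto simp: coord_space_def Inl_mem_coords Inr_mem_coords Suc_le_eq)

lemma block_pos: "p \<in> coord_space \<Longrightarrow> j \<in> {1..m+1} \<Longrightarrow> 0 < block p j"
  by (simp add: block_def coord_space_pos)

lemma block_tail_pos: "p \<in> coord_space \<Longrightarrow> 0 < block_tail p j"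
  unfolding block_tail_def by (intro prod_pos) (simp add: block_pos)

lemma tail_root_pos: "p \<in> coord_space \<Longrightarrow> 0 < tail_root p j"
  unfolding tail_root_def by (intro prod_pos) (simp add: coord_space_pos)

lemma block_tail_step:
  assumes "j \<in> {1..m+1}"
  shows "block_tail p (j - 1) = block p j * block_tail p j"
proof -
  have "block_tail p (j - 1) = (\<Prod>i\<in>{j..m+1}. block p i)"
    using assms by (simp add: block_tail_def)
  also have "\<dots> = block p j * (\<Prod>i\<in>{j+1..m+1}. block p i)"
    using assms by (subst prod.atLeast_Suc_atMost) auto
  finally show ?thesis
    by (simp add: block_tail_def)
qed

lemma block_tail_dvd: "i \<le> j \<Longrightarrow> block_tail p j dvd block_tail p i"
  unfolding block_tail_def by (intro prod_dvd_prod_subset) auto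

lemma tail_root_pow:
  assumes "j \<le> m"
  shows "tail_root p j ^ \<gamma> j = block_tail p j"
  unfolding tail_root_def block_tail_def block_def prod_power_distrib power_mult[symmetric]
proof (intro prod.cong refl)
  fix i
  assume "i \<in> {j+1..m+1}"
  then have "\<gamma> j dvd \<gamma> (i - 1)"
    by (intro gamma_dvd) auto
  then show "p (Inl i) ^ (\<gamma> (i - 1) div \<gamma> j * \<gamma> j) = p (Inl i) ^ \<gamma> (i - 1)"
    by simp
qed

lemma ram_chain_param: "j \<le> m + 1 \<Longrightarrow> ram_chain (param_n p) (param_d p) j = block_tail p j"
  using m_pos by (auto simp: ram_chain_def param_n_def param_d_def tail_root_pow block_tail_def)

lemma param_mem_tuples: "p \<in> coord_space \<Longrightarrow> param_n p \<in> tuples (m + 1)"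
  by (auto simp: tuples_def param_n_def Suc_le_eq block_tail_pos coord_space_pos)

lemma param_mem_ram_divisors:
  assumes "p \<in> coord_space"
  shows "param_d p \<in> ram_divisors (param_n p)"
proof -
  have "tail_root p j ^ \<gamma> j dvd param_n p i" if "j \<in> {1..m}" "i \<in> {1..j+1}" for i j
  proof -
    have "block_tail p j dvd block_tail p (i - 1)"
      using that by (intro block_tail_dvd) auto
    then show ?thesis
      using that by (simp add: tail_root_pow param_n_def)
  qed
  then show ?thesis
    using assms by (auto simp: ram_divisors_def param_d_def dvd_Gcd_iff Suc_le_eq tail_root_pos)
qed

lemma inj_on_param: "inj_on (\<lambda>p. (param_n p, param_d p)) coord_space"
proof (rule inj_onI)
  fix p q
  assume p: "p \<in> coord_space" and q: "q \<in> coord_space"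
    and eq: "(param_n p, param_d p) = (param_n q, param_d q)"
  have tail: "block_tail p j = block_tail q j" if "j \<le> m + 1" for j
    using ram_chain_param[OF that, of p] ram_chain_param[OF that, of q] eq by simp
  have Inl: "p (Inl j) = q (Inl j)" if "j \<in> {1..m+1}" for j
  proof -
    have "block p j = block q j"
      using block_tail_step[OF that, of p] block_tail_step[OF that, of q] tail[of j] tail[of "j - 1"]
        block_tail_pos[OF p, of j] that by auto
    moreover have "0 < \<gamma> (j - 1)"
      using that by (intro gamma_gt_0) auto
    ultimately show ?thesis
      by (simp add: block_def power_eq_iff_eq_base)
  qed
  have Inr: "p (Inr j) = q (Inr j)" if "j \<in> {2..m+1}" for j
  proof -
    have "param_n p j = param_n q j"
      using eq by simp
    then have "block_tail p (j - 1) * p (Inr j) = block_tail q (j - 1) * q (Inr j)"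
      using that by (simp add: param_n_def)
    moreover have "block_tail p (j - 1) = block_tail q (j - 1)"
      using that by (intro tail) auto
    ultimately show ?thesis
      using block_tail_pos[OF p, of "j - 1"] by simp
  qed
  show "p = q"
  proof (rule PiE_ext[of p coords "\<lambda>_. {1..}" q])
    show "p \<in> PiE coords (\<lambda>_. {1..})" "q \<in> PiE coords (\<lambda>_. {1..})"
      using p q by (simp_all add: coord_space_def)
    show "p x = q x" if "x \<in> coords" for x
      using that Inl Inr by (cases x) (auto simp: Inl_mem_coords Inr_mem_coords)
  qed
qed

lemma ram_chain_quotients:
  assumes "n 1 = y ^ \<gamma> 0" "0 < y" "d \<in> ram_divisors n"
    and "\<forall>j\<in>{1..m+1}. ram_chain n d j dvd ram_chain n d (j - 1)"
  obtains c where "\<forall>j\<in>{1..m+1}. 0 < c j \<and> ram_chain n d (j - 1) = c j ^ \<gamma> (j - 1) * ram_chain n d j"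
proof -
  \<comment> \<open>Every e_j is a \<delta>_j-th power w_j^\<delta>_j, the last one as e_(m+1) = 1^\<gamma>_m.\<close>
  define w where "w j = (if j = 0 then y else if j \<le> m then d j else 1)" for j
  define \<delta> where "\<delta> j = \<gamma> (min j m)" for j
  have chain_pow: "ram_chain n d j = w j ^ \<delta> j" if "j \<le> m + 1" for j
    using that assms(1) by (auto simp: ram_chain_def w_def \<delta>_def min_def)
  have "\<exists>c>0. ram_chain n d (j - 1) = c ^ \<gamma> (j - 1) * ram_chain n d j" if j: "j \<in> {1..m+1}" for j
  proof -
    have "j - 1 \<le> min j m" "min j m \<le> m" "j - 1 \<le> m" "j \<le> m + 1"
      using j by auto
    then have \<delta>: "\<delta> (j - 1) = \<gamma> (j - 1)" "\<gamma> (j - 1) dvd \<delta> j"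
      unfolding \<delta>_def by (auto intro: gamma_dvd)
    have e: "ram_chain n d j = w j ^ \<delta> j" "ram_chain n d (j - 1) = w (j - 1) ^ \<gamma> (j - 1)"
      using chain_pow[of j] chain_pow[of "j - 1"] \<open>j \<le> m + 1\<close> \<delta>(1) by simp_all
    have "w j ^ \<delta> j dvd w (j - 1) ^ \<gamma> (j - 1)"
      using assms(4) j unfolding e[symmetric] by blast
    moreover have "0 < w (j - 1)"
      using assms(2) ram_divisors_pos[OF assms(3), of "j - 1"] j by (auto simp: w_def)
    ultimately obtain c where "0 < c" "w (j - 1) ^ \<gamma> (j - 1) = c ^ \<gamma> (j - 1) * w j ^ \<delta> j"
      using pow_dvd_pow_quotient[OF \<delta>(2) gamma_gt_0[OF \<open>j - 1 \<le> m\<close>]] by blast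
    then show ?thesis
      unfolding e by blast
  qed
  then have "\<exists>c. \<forall>j\<in>{1..m+1}. 0 < c j \<and> ram_chain n d (j - 1) = c j ^ \<gamma> (j - 1) * ram_chain n d j"
    by (intro bchoice ballI)
  then show ?thesis
    using that by blast
qed

lemma block_tail_eqI:
  assumes "\<forall>j\<in>{1..m+1}. e (j - 1) = block p j * e j" "e (m + 1) = 1" "j \<le> m + 1"
  shows "block_tail p j = e j"
  using assms(3)
proof (induction j rule: inc_induct)
  case base
  then show ?case
    using assms(2) by (simp add: block_tail_def)
next
  case (step j)
  then have j: "Suc j \<in> {1..m+1}"
    by simp
  then have "e j = block p (Suc j) * e (Suc j)"
    using bspec[OF assms(1) j] by simp
  then show ?case
    using block_tail_step[OF j, of p] step.IH by simp
qed

lemma param_eqI: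
  assumes "n \<in> tuples (m + 1)" "d \<in> ram_divisors n"
    and tail: "\<And>j. j \<le> m + 1 \<Longrightarrow> block_tail p j = ram_chain n d j"
    and "\<And>j. j \<in> {2..m+1} \<Longrightarrow> block_tail p (j - 1) * p (Inr j) = n j"
  shows "param_n p = n" and "param_d p = d"
proof -
  show "param_n p = n"
  proof
    fix j
    show "param_n p j = n j"
    proof (cases "j \<in> {1..m+1}")
      case True
      then have "j = 1 \<or> j \<in> {2..m+1}"
        by auto
      then show ?thesis
        using True tail[of 0] assms(4)[of j] by (auto simp: param_n_def ram_chain_def)
    next
      case False
      then show ?thesis
        by (simp only: param_n_def if_False tuples_outside[OF assms(1) False])
    qed
  qed
  show "param_d p = d"
  proof
    fix j
    show "param_d p j = d j"
    proof (cases "j \<in> {1..m}")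
      case True
      then have "tail_root p j ^ \<gamma> j = d j ^ \<gamma> j"
        using tail[of j] by (simp add: tail_root_pow ram_chain_def)
      then show ?thesis
        using True gamma_gt_0[of j] by (simp add: param_d_def power_eq_iff_eq_base)
    next
      case False
      then show ?thesis
        by (simp only: param_d_def if_False ram_divisors_outside[OF assms(2) False])
    qed
  qed
qed

lemma ram_chain_in_param_image:
  assumes "n \<in> tuples (m + 1)" "d \<in> ram_divisors n" "n 1 = y ^ \<gamma> 0" "0 < y"
    and "\<forall>j\<in>{1..m+1}. ram_chain n d j dvd ram_chain n d (j - 1)"
  shows "(n, d) \<in> (\<lambda>p. (param_n p, param_d p)) ` coord_space"
proof -
  let ?e = "ram_chain n d"
  obtain c where c: "\<forall>j\<in>{1..m+1}. 0 < c j \<and> ?e (j - 1) = c j ^ \<gamma> (j - 1) * ?e j"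
    using ram_chain_quotients[OF assms(3,4,2,5)] .
  have e_dvd: "?e (j - 1) dvd n j" if "j \<in> {2..m+1}" for j
    using ram_divisors_dvd[OF assms(2), of "j - 1" j] that by (simp add: ram_chain_def)
  have k_pos: "0 < n j div ?e (j - 1)" if "j \<in> {2..m+1}" for j
    using dvd_div_eq_0_iff[OF e_dvd[OF that]] tuples_pos[OF assms(1), of j] that by simp
  define p where "p = restrict (\<lambda>x. case x of Inl j \<Rightarrow> c j | Inr j \<Rightarrow> n j div ?e (j - 1)) coords"
  have p: "p \<in> coord_space"
    using c k_pos by (auto simp: p_def coord_space_def coords_def restrict_PiE_iff Suc_le_eq)
  have "\<forall>j\<in>{1..m+1}. ?e (j - 1) = block p j * ?e j"
    using c by (simp add: block_def p_def Inl_mem_coords)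
  then have tail: "block_tail p j = ?e j" if "j \<le> m + 1" for j
    using that by (intro block_tail_eqI) (simp_all add: ram_chain_def)
  have "block_tail p (j - 1) * p (Inr j) = n j" if j: "j \<in> {2..m+1}" for j
  proof -
    have "block_tail p (j - 1) = ?e (j - 1)"
      using j by (intro tail) auto
    moreover have "p (Inr j) = n j div ?e (j - 1)"
      using j by (simp add: p_def Inr_mem_coords)
    ultimately show ?thesis
      using e_dvd[OF j] by simp
  qed
  with tail have "param_n p = n" "param_d p = d"
    using param_eqI[OF assms(1,2)] by blast+
  then show ?thesis
    using p by force
qed

lemma finite_ram_divisors:
  assumes "n \<in> tuples (m + 1)"
  shows "finite (ram_divisors n)"
proof -
  have "d j \<le> n 1" if "d \<in> ram_divisors n" "j \<in> {1..m}" for d j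
  proof -
    have "d j \<le> d j ^ \<gamma> j"
      using ram_divisors_pos[OF that] gamma_gt_0[of j] that(2) by (simp add: self_le_power)
    also have "\<dots> \<le> n 1"
      using ram_divisors_dvd[OF that, of 1] tuples_pos[OF assms, of 1] that(2) by (simp add: dvd_imp_le)
    finally show ?thesis .
  qed
  then have "ram_divisors n \<subseteq> {d. \<forall>j. (j \<in> {1..m} \<longrightarrow> d j \<in> {..n 1}) \<and> (j \<notin> {1..m} \<longrightarrow> d j = 0)}"
    using ram_divisors_outside by blast
  then show ?thesis
    by (rule finite_subset) (intro finite_set_of_finite_funs; simp)
qed

definition ram_summand ::
    "(nat \<Rightarrow> nat \<Rightarrow> complex) \<Rightarrow> (nat \<Rightarrow> complex) \<Rightarrow> (nat \<Rightarrow> nat) \<times> (nat \<Rightarrow> nat) \<Rightarrow> complex" where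
  "ram_summand f s = (\<lambda>(n, d). a_pow (\<gamma> 0) (n 1)
     * (\<Prod>j\<in>{1..m+1}. fq (f j) (ram_chain n d (j - 1)) (ram_chain n d j))
     / (\<Prod>i\<in>{1..m+1}. of_nat (n i) powr s i))"

definition coord_factor ::
    "(nat \<Rightarrow> nat \<Rightarrow> complex) \<Rightarrow> (nat \<Rightarrow> complex) \<Rightarrow> nat + nat \<Rightarrow> nat \<Rightarrow> complex" where
  "coord_factor f s x c = (case x of
       Inl j \<Rightarrow> f j (c ^ \<gamma> (j - 1)) / of_nat (c ^ \<gamma> (j - 1)) powr (\<Sum>i=1..j. s i)
     | Inr j \<Rightarrow> 1 / of_nat c powr s j)"

lemma ram_summand_eq_0:
  assumes "n \<in> tuples (m + 1)" "d \<in> ram_divisors n"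
    and "(n, d) \<notin> (\<lambda>p. (param_n p, param_d p)) ` coord_space"
  shows "ram_summand f s (n, d) = 0"
proof (rule ccontr)
  assume nonzero: "ram_summand f s (n, d) \<noteq> 0"
  then obtain y where y: "n 1 = y ^ \<gamma> 0" "0 < y"
    by (auto simp: ram_summand_def a_pow_def Suc_le_eq split: if_splits)
  have "(\<Prod>j\<in>{1..m+1}. fq (f j) (ram_chain n d (j - 1)) (ram_chain n d j)) \<noteq> 0"
    using nonzero unfolding ram_summand_def split_conv by (rule contrapos_nn) simp
  then have "\<forall>j\<in>{1..m+1}. fq (f j) (ram_chain n d (j - 1)) (ram_chain n d j) \<noteq> 0"
    using prod_zero_iff[OF finite_atLeastAtMost] by blast
  then have "\<forall>j\<in>{1..m+1}. ram_chain n d j dvd ram_chain n d (j - 1)"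
    using fq_nonzero_imp_dvd by blast
  then show False
    using ram_chain_in_param_image[OF assms(1,2) y] assms(3) by blast
qed

lemma a_pow_param: "p \<in> coord_space \<Longrightarrow> a_pow (\<gamma> 0) (param_n p 1) = 1"
  using tail_root_pow[of 0 p] tail_root_pos[of p 0] by (auto simp: param_n_def a_pow_def Suc_le_eq)

lemma ram_chain_factors_param:
  assumes p: "p \<in> coord_space"
  shows "(\<Prod>j\<in>{1..m+1}. fq (f j) (ram_chain (param_n p) (param_d p) (j - 1)) (ram_chain (param_n p) (param_d p) j))
    = (\<Prod>j\<in>{1..m+1}. f j (block p j))"
proof (intro prod.cong refl)
  fix j
  let ?e = "ram_chain (param_n p) (param_d p)"
  assume j: "j \<in> {1..m+1}"
  then have "?e (j - 1) = block p j * block_tail p j" "?e j = block_tail p j"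
    using ram_chain_param[of "j - 1" p] ram_chain_param[of j p] block_tail_step[OF j] by auto
  then show "fq (f j) (?e (j - 1)) (?e j) = f j (block p j)"
    using fq_mult_right block_tail_pos[OF p] by simp
qed

lemma block_tail_powr_prod:
  assumes p: "p \<in> coord_space"
  shows "(\<Prod>j\<in>{1..m+1}. (of_nat (block_tail p (j - 1)) :: complex) powr s j)
    = (\<Prod>j=1..m+1. of_nat (block p j) powr (\<Sum>i=1..j. s i))"
proof -
  have "block_tail p (j - 1) = (\<Prod>i=j..m+1. block p i)" if "j \<in> {1..m+1}" for j
    using that by (simp add: block_tail_def)
  then have "(\<Prod>j\<in>{1..m+1}. (of_nat (block_tail p (j - 1)) :: complex) powr s j)
      = (\<Prod>j=1..m+1. of_nat (\<Prod>i=j..m+1. block p i) powr s j)"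
    by (intro prod.cong) simp_all
  also have "\<dots> = (\<Prod>j=1..m+1. of_nat (block p j) powr (\<Sum>i=1..j. s i))"
    by (rule of_nat_prod_tails_powr) (simp add: block_pos[OF p])
  finally show ?thesis .
qed

lemma param_n_powr_prod:
  assumes p: "p \<in> coord_space"
  shows "(\<Prod>j\<in>{1..m+1}. (of_nat (param_n p j) :: complex) powr s j)
    = (\<Prod>j=1..m+1. of_nat (block p j) powr (\<Sum>i=1..j. s i)) * (\<Prod>j\<in>{2..m+1}. of_nat (p (Inr j)) powr s j)"
proof -
  have "(\<Prod>j\<in>{1..m+1}. (of_nat (param_n p j) :: complex) powr s j)
      = (\<Prod>j\<in>{1..m+1}. of_nat (block_tail p (j - 1)) powr s j
          * of_nat (if j = 1 then 1 else p (Inr j)) powr s j)"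
    by (intro prod.cong refl) (simp only: param_n_def if_True of_nat_mult_powr)
  also have "\<dots> = (\<Prod>j\<in>{1..m+1}. of_nat (block_tail p (j - 1)) powr s j)
      * (\<Prod>j\<in>{1..m+1}. of_nat (if j = 1 then 1 else p (Inr j)) powr s j)"
    by (rule prod.distrib)
  also have "(\<Prod>j\<in>{1..m+1}. (of_nat (if j = 1 then 1 else p (Inr j)) :: complex) powr s j)
      = (\<Prod>j\<in>{2..m+1}. of_nat (p (Inr j)) powr s j)"
    unfolding prod_atLeast1_split by (simp add: prod.cong)
  finally show ?thesis
    unfolding block_tail_powr_prod[OF p] .
qed

lemma ram_summand_param:
  assumes "p \<in> coord_space"
  shows "ram_summand f s (param_n p, param_d p) = (\<Prod>x\<in>coords. coord_factor f s x (p x))"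
  unfolding ram_summand_def split_conv a_pow_param[OF assms] ram_chain_factors_param[OF assms]
    param_n_powr_prod[OF assms] coords_def prod.Plus[OF finite_atLeastAtMost finite_atLeastAtMost]
  by (simp add: coord_factor_def block_def prod_dividef)

lemma finite_coords: "finite coords"
  by (simp add: coords_def)

lemma coord_factor_norm_summable:
  assumes "\<forall>j\<in>{2..m+1}. Re (s j) > 1"
    and "\<forall>j\<in>{1..m+1}. ereal (Re (\<Sum>i=1..j. s i)) > sigma_abs (f j)"
    and "x \<in> coords"
  shows "(\<lambda>c. norm (coord_factor f s x c)) summable_on {1..}"
proof (cases x)
  case (Inl j)
  then have j: "j \<in> {1..m+1}"
    using assms(3) by (simp add: Inl_mem_coords)
  then have "0 < \<gamma> (j - 1)"
    by (intro gamma_gt_0) auto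
  moreover have "(\<lambda>n. norm (f j n / of_nat n powr (\<Sum>i=1..j. s i))) summable_on {1..}"
    using assms(2) j by (intro norm_summable_Dirichlet_series) auto
  ultimately show ?thesis
    unfolding Inl coord_factor_def sum.case by (rule summable_on_powers)
next
  case (Inr j)
  then have "1 < Re (s j)"
    using assms(1,3) by (simp add: Inr_mem_coords)
  then show ?thesis
    unfolding Inr coord_factor_def sum.case by (rule norm_summable_zeta_series)
qed

lemma prod_infsum_coord_factor:
  "(\<Prod>x\<in>coords. infsum (coord_factor f s x) {1..})
    = (\<Prod>j\<in>{2..m+1}. zeta (s j)) * (\<Prod>j\<in>{1..m+1}. L (\<Sum>i=1..j. s i) (restr_pow (\<gamma> (j - 1)) (f j)))"
proof -
  have "(\<Prod>j\<in>{1..m+1}. infsum (coord_factor f s (Inl j)) {1..})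
      = (\<Prod>j\<in>{1..m+1}. L (\<Sum>i=1..j. s i) (restr_pow (\<gamma> (j - 1)) (f j)))"
  proof (intro prod.cong refl)
    fix j
    assume "j \<in> {1..m+1}"
    then have "0 < \<gamma> (j - 1)"
      by (intro gamma_gt_0) auto
    then show "infsum (coord_factor f s (Inl j)) {1..} = L (\<Sum>i=1..j. s i) (restr_pow (\<gamma> (j - 1)) (f j))"
      unfolding coord_factor_def sum.case by (rule L_restr_pow[symmetric])
  qed
  moreover have "(\<Prod>j\<in>{2..m+1}. infsum (coord_factor f s (Inr j)) {1..}) = (\<Prod>j\<in>{2..m+1}. zeta (s j))"
    unfolding coord_factor_def sum.case zeta_def ..
  ultimately show ?thesis
    unfolding coords_def prod.Plus[OF finite_atLeastAtMost finite_atLeastAtMost] o_def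
    by (simp only: mult.commute)
qed

lemma L_multi_a_pow_ram_sum:
  assumes "\<forall>j\<in>{2..m+1}. Re (s j) > 1"
    and "\<forall>j\<in>{1..m+1}. ereal (Re (\<Sum>i=1..j. s i)) > sigma_abs (f j)"
  shows "L_multi (m + 1) s (\<lambda>n. a_pow (\<gamma> 0) (n 1) * ram_sum m \<gamma> f n)
    = (\<Prod>j\<in>{2..m+1}. zeta (s j)) * (\<Prod>j\<in>{1..m+1}. L (\<Sum>i=1..j. s i) (restr_pow (\<gamma> (j - 1)) (f j)))"
    (is "_ = ?rhs")
proof -
  have "((\<lambda>p. \<Prod>x\<in>coords. coord_factor f s x (p x)) has_sum ?rhs) coord_space"
    unfolding coord_space_def prod_infsum_coord_factor[symmetric]
    by (rule has_sum_prod_PiE[OF finite_coords coord_factor_norm_summable[OF assms]])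
  then have "(ram_summand f s has_sum ?rhs) (Sigma (tuples (m + 1)) ram_divisors)"
    using inj_on_param ram_summand_param ram_summand_eq_0 param_mem_tuples param_mem_ram_divisors
    by (intro has_sum_reindex_support[of "\<lambda>p. (param_n p, param_d p)" coord_space]) auto
  moreover have "((\<lambda>d. ram_summand f s (n, d)) has_sum
      (a_pow (\<gamma> 0) (n 1) * ram_sum m \<gamma> f n / (\<Prod>i\<in>{1..m+1}. of_nat (n i) powr s i))) (ram_divisors n)"
    if "n \<in> tuples (m + 1)" for n
    using finite_ram_divisors[OF that]
    by (intro has_sum_finiteI) (simp_all add: ram_sum_eq ram_summand_def sum_distrib_left sum_divide_distrib)
  ultimately have "((\<lambda>n. a_pow (\<gamma> 0) (n 1) * ram_sum m \<gamma> f n / (\<Prod>i\<in>{1..m+1}. of_nat (n i) powr s i))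
      has_sum ?rhs) (tuples (m + 1))"
    by (rule has_sum_SigmaD)
  then show ?thesis
    unfolding L_multi_def by (rule infsumI)
qed

lemma L_multi_ram_sum:
  assumes "\<gamma> 0 = 1"
    and "\<forall>j\<in>{2..m+1}. Re (s j) > 1"
    and "\<forall>j\<in>{1..m+1}. ereal (Re (\<Sum>i=1..j. s i)) > sigma_abs (f j)"
  shows "L_multi (m + 1) s (ram_sum m \<gamma> f)
    = (\<Prod>j\<in>{2..m+1}. zeta (s j)) * L (s 1) (f 1)
      * (\<Prod>j\<in>{2..m+1}. L (\<Sum>i=1..j. s i) (restr_pow (\<gamma> (j - 1)) (f j)))"
proof -
  have "L_multi (m + 1) s (ram_sum m \<gamma> f) = L_multi (m + 1) s (\<lambda>n. a_pow (\<gamma> 0) (n 1) * ram_sum m \<gamma> f n)"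
  proof (rule L_multi_cong)
    fix n
    assume "n \<in> tuples (m + 1)"
    then have "a_pow 1 (n 1) = 1"
      using tuples_pos[of n "m + 1" 1] by (intro a_pow_one) simp
    then show "ram_sum m \<gamma> f n = a_pow (\<gamma> 0) (n 1) * ram_sum m \<gamma> f n"
      using assms(1) by simp
  qed
  also have "\<dots> = (\<Prod>j\<in>{2..m+1}. zeta (s j))
      * (\<Prod>j\<in>{1..m+1}. L (\<Sum>i=1..j. s i) (restr_pow (\<gamma> (j - 1)) (f j)))"
    using assms(2,3) by (rule L_multi_a_pow_ram_sum)
  finally have "L_multi (m + 1) s (ram_sum m \<gamma> f) = (\<Prod>j\<in>{2..m+1}. zeta (s j))
      * (\<Prod>j\<in>{1..m+1}. L (\<Sum>i=1..j. s i) (restr_pow (\<gamma> (j - 1)) (f j)))" .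
  moreover have "L (\<Sum>i=1..1. s i) (restr_pow (\<gamma> (1 - 1)) (f 1)) = L (s 1) (f 1)"
    using assms(1) L_restr_pow_one by simp
  ultimately show ?thesis
    unfolding prod_atLeast1_split[where n = m] by (simp only: mult.assoc)
qed

end

theorem theorem3p5:
  fixes m :: nat and f :: "nat \<Rightarrow> nat \<Rightarrow> complex" and \<gamma> :: "nat \<Rightarrow> nat"
    and s :: "nat \<Rightarrow> complex"
  assumes "m \<ge> 1"
    and "\<forall>j\<in>{0..m}. \<gamma> j \<ge> 1"
    and "\<forall>j\<in>{1..m}. \<gamma> (j - 1) dvd \<gamma> j"
    and "\<forall>j\<in>{2..m+1}. Re (s j) > 1"
    and "\<forall>j\<in>{1..m+1}. ereal (Re (\<Sum>i=1..j. s i)) > sigma_abs (f j)"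
  shows "L_multi (m + 1) s (\<lambda>n. a_pow (\<gamma> 0) (n 1) * ram_sum m \<gamma> f n)
           = (\<Prod>j\<in>{2..m+1}. zeta (s j))
             * (\<Prod>j\<in>{1..m+1}. L (\<Sum>i=1..j. s i) (restr_pow (\<gamma> (j - 1)) (f j)))
         \<and> (\<gamma> 0 = 1 \<longrightarrow> L_multi (m + 1) s (ram_sum m \<gamma> f)
           = (\<Prod>j\<in>{2..m+1}. zeta (s j)) * L (s 1) (f 1)
             * (\<Prod>j\<in>{2..m+1}. L (\<Sum>i=1..j. s i) (restr_pow (\<gamma> (j - 1)) (f j))))"
proof -
  interpret exponent_chain m \<gamma>
    using assms(1-3) by unfold_locales
  show ?thesis
    using L_multi_a_pow_ram_sum[OF assms(4,5)] L_multi_ram_sum[OF _ assms(4,5)] by blast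
qed

end
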